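(* In the multi-unit auction with unit demand (with $m$ units, $n$ bidders, $1\le m\le n-1$, types in $[L,U]$), no feasible anonymous Groves mechanism welfare dominates an OEL mechanism (of any index $k$).
   Context: Multi-unit auction with unit demand: $m$ identical units, $n\ge 2$ bidders, $1\le m\le n-1$, each bidder wants at most one unit; bidder $i$'s type $\theta_i\in\Theta_i=[L,U]$ ($L<U$) is her value for one unit, and $v_i=\theta_i$ if she gets a unit, $0$ otherwise. Efficient decisions allocate units to $m$ highest bidders. A Groves mechanism (efficient decision function $f$) has taxes $t_i(\theta)=\sum_{j\ne i}v_j(f(\theta),\theta_j)+h_i(\theta_{-i})$; player $i$'s utility is value plus $t_i$. It is anonymous if all $h_i$ equal one function $h$ symmetric in its $n-1$ arguments. The VCG (Clarke) mechanism uses $h_i(\theta_{-i})=-\max_d\sum_{j\ne i}v_j(d,\theta_j)$; here $\sum_i t_i^{VCG}(\theta)=-m[\theta]_{m+1}$, where $[x]_j$ denotes the $j$th highest entry of a vector $x$. A mechanism is feasible if $\sum_i t_i(\theta)\le 0$ for all $\theta$. Mechanism $t'$ welfare dominates $t$ (same decision function) if $\sum_i t_i(\theta)\le\sum_i t'_i(\theta)$ for all $\theta$ with strict inequality for some $\theta$. OEL mechanisms: $t_i(\theta)=t_i^{VCG}(\theta)+c_0+\sum_{j=1}^{n-1}c_j[\theta_{-i}]_j$, where for an index $k\in\{0,\dots,n\}$ with $k-m$ odd the constants are: writing $\alpha_i=(-1)^{m-i}\binom{n-i-1}{n-m-1}/\binom{m-1}{i-1}$ and $\beta_i=(-1)^{m-i-1}\binom{i-1}{m-1}/\binom{n-m-1}{n-i-1}$,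 • $k=0$: $c_i=\alpha_i$ for $i=1,\dots,m$; $c_0=Um/n-U\sum_{i=1}^m\alpha_i$; other $c_i=0$. • $1\le k\le m$: $c_i=\alpha_i$ for $i=k+1,\dots,m$; $c_k=m/n-\sum_{i=k+1}^m\alpha_i$; other $c_i=0$ (including $c_0$). • $m+1\le k\le n-1$: $c_i=\beta_i$ for $i=m+1,\dots,k-1$; $c_k=m/n-\sum_{i=m+1}^{k-1}\beta_i$; other $c_i=0$. • $k=n$: $c_i=\beta_i$ for $i=m+1,\dots,n-1$; $c_0=Lm/n-L\sum_{i=m+1}^{n-1}\beta_i$; other $c_i=0$. *)

theory Defs
  imports Complex_Main "HOL-Combinatorics.Permutations"
begin

text \<open>Bidders are indexed 0,...,n-1. A type profile is a function theta :: nat => real,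
  only the values at indices < n matter.\<close>

definition profiles :: "nat \<Rightarrow> real \<Rightarrow> real \<Rightarrow> (nat \<Rightarrow> real) set" where
  "profiles n L U = {\<theta>. \<forall>i<n. \<theta> i \<in> {L..U}}"

text \<open>A decision: the set of bidders receiving a unit (all m units allocated).\<close>
definition decisions :: "nat \<Rightarrow> nat \<Rightarrow> nat set set" where
  "decisions n m = {d. d \<subseteq> {0..<n} \<and> card d = m}"

definition val :: "nat set \<Rightarrow> nat \<Rightarrow> real \<Rightarrow> real" where
  "val d j x = (if j \<in> d then x else 0)"

definition efficient :: "nat \<Rightarrow> nat \<Rightarrow> real \<Rightarrow> real \<Rightarrow> ((nat \<Rightarrow> real) \<Rightarrow> nat set) \<Rightarrow> bool" where
  "efficient n m L U f \<longleftrightarrow> (\<forall>\<theta>\<in>profiles n L U. f \<theta> \<in> decisions n m \<and>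
      (\<forall>d\<in>decisions n m. (\<Sum>j<n. val d j (\<theta> j)) \<le> (\<Sum>j<n. val (f \<theta>) j (\<theta> j))))"

text \<open>theta_{-i}: the (n-1)-vector of the other types, indices 0..n-2 (entries beyond set to 0).\<close>
definition others :: "nat \<Rightarrow> nat \<Rightarrow> (nat \<Rightarrow> real) \<Rightarrow> (nat \<Rightarrow> real)" where
  "others n i \<theta> = (\<lambda>j. if j < i then \<theta> j else if j < n - 1 then \<theta> (Suc j) else 0)"

text \<open>[x]_j: the j-th highest entry (j >= 1) of the vector (x 0, ..., x (len-1)).\<close>
definition kth_largest :: "(nat \<Rightarrow> real) \<Rightarrow> nat \<Rightarrow> nat \<Rightarrow> real" where
  "kth_largest x len j = rev (sort (map x [0..<len])) ! (j - 1)"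

definition groves_tax ::
  "nat \<Rightarrow> ((nat \<Rightarrow> real) \<Rightarrow> nat set) \<Rightarrow> (nat \<Rightarrow> (nat \<Rightarrow> real) \<Rightarrow> real) \<Rightarrow> nat \<Rightarrow> (nat \<Rightarrow> real) \<Rightarrow> real" where
  "groves_tax n f h i \<theta> = (\<Sum>j\<in>{0..<n}-{i}. val (f \<theta>) j (\<theta> j)) + h i (others n i \<theta>)"

text \<open>Anonymous Groves mechanism: all h_i equal one symmetric function h of n-1 arguments.\<close>
definition symmetric_fn :: "nat \<Rightarrow> real \<Rightarrow> real \<Rightarrow> ((nat \<Rightarrow> real) \<Rightarrow> real) \<Rightarrow> bool" where
  "symmetric_fn n L U h \<longleftrightarrow> (\<forall>x. (\<forall>j<n-1. x j \<in> {L..U}) \<longrightarrow>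
      (\<forall>\<pi>. \<pi> permutes {0..<n-1} \<longrightarrow> h (x \<circ> \<pi>) = h x))"

definition vcg_tax :: "nat \<Rightarrow> nat \<Rightarrow> ((nat \<Rightarrow> real) \<Rightarrow> nat set) \<Rightarrow> nat \<Rightarrow> (nat \<Rightarrow> real) \<Rightarrow> real" where
  "vcg_tax n m f i \<theta> = (\<Sum>j\<in>{0..<n}-{i}. val (f \<theta>) j (\<theta> j))
      - Max ((\<lambda>d. \<Sum>j\<in>{0..<n}-{i}. val d j (\<theta> j)) ` {d \<in> decisions n m. i \<notin> d})"

definition alpha :: "nat \<Rightarrow> nat \<Rightarrow> nat \<Rightarrow> real" where
  "alpha n m i = (-1) ^ (m - i) * real ((n - i - 1) choose (n - m - 1)) / real ((m - 1) choose (i - 1))"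

text \<open>(-1)^(m-i-1) = (-1)^(i-m-1) for i >= m+1.\<close>
definition beta :: "nat \<Rightarrow> nat \<Rightarrow> nat \<Rightarrow> real" where
  "beta n m i = (-1) ^ (i - m - 1) * real ((i - 1) choose (m - 1)) / real ((n - m - 1) choose (n - i - 1))"

definition oel_c :: "nat \<Rightarrow> nat \<Rightarrow> real \<Rightarrow> real \<Rightarrow> nat \<Rightarrow> nat \<Rightarrow> real" where
  "oel_c n m L U k j =
    (if k = 0 then
       (if j = 0 then U * real m / real n - U * (\<Sum>i=1..m. alpha n m i)
        else if 1 \<le> j \<and> j \<le> m then alpha n m j else 0)
     else if k \<le> m then
       (if k + 1 \<le> j \<and> j \<le> m then alpha n m j
        else if j = k then real m / real n - (\<Sum>i=k+1..m. alpha n m i) else 0)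
     else if k \<le> n - 1 then
       (if m + 1 \<le> j \<and> j \<le> k - 1 then beta n m j
        else if j = k then real m / real n - (\<Sum>i=m+1..k-1. beta n m i) else 0)
     else
       (if m + 1 \<le> j \<and> j \<le> n - 1 then beta n m j
        else if j = 0 then L * real m / real n - L * (\<Sum>i=m+1..n-1. beta n m i) else 0))"

definition oel_tax :: "nat \<Rightarrow> nat \<Rightarrow> real \<Rightarrow> real \<Rightarrow> nat \<Rightarrow> ((nat \<Rightarrow> real) \<Rightarrow> nat set)
    \<Rightarrow> nat \<Rightarrow> (nat \<Rightarrow> real) \<Rightarrow> real" where
  "oel_tax n m L U k f i \<theta> = vcg_tax n m f i \<theta> + oel_c n m L U k 0
     + (\<Sum>j=1..n-1. oel_c n m L U k j * kth_largest (others n i \<theta>) (n - 1) j)"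

definition feasible :: "nat \<Rightarrow> real \<Rightarrow> real \<Rightarrow> (nat \<Rightarrow> (nat \<Rightarrow> real) \<Rightarrow> real) \<Rightarrow> bool" where
  "feasible n L U t \<longleftrightarrow> (\<forall>\<theta>\<in>profiles n L U. (\<Sum>i<n. t i \<theta>) \<le> 0)"

definition welfare_dominates ::
  "nat \<Rightarrow> real \<Rightarrow> real \<Rightarrow> (nat \<Rightarrow> (nat \<Rightarrow> real) \<Rightarrow> real) \<Rightarrow> (nat \<Rightarrow> (nat \<Rightarrow> real) \<Rightarrow> real) \<Rightarrow> bool" where
  "welfare_dominates n L U t' t \<longleftrightarrow>
     (\<forall>\<theta>\<in>profiles n L U. (\<Sum>i<n. t i \<theta>) \<le> (\<Sum>i<n. t' i \<theta>)) \<and>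
     (\<exists>\<theta>\<in>profiles n L U. (\<Sum>i<n. t i \<theta>) < (\<Sum>i<n. t' i \<theta>))"

end

theory Submission
  imports Defs
begin

text \<open>
  Fix the OEL index k.  On the "face" of profiles where the k-th and
  (k+1)-th highest types coincide (where the highest type is U if k = 0, the lowest
  is L if k = n), the OEL mechanism is exactly budget balanced.  If an anonymous
  Groves mechanism with function h collected at least the OEL revenue everywhere and
  were feasible, its total payment would also be zero on that face.  Writing the
  difference of the two taxes of bidder i as a symmetric function g of the other types,
  this says that g sums to zero over the n leave-one-out subprofiles of every profile
  on the face.  An induction on the number of entries differing from a pivot value
  then shows g = 0, so the two mechanisms coincide and there is no strict improvement.
\<close>

text \<open>Profiles are handled as lists: a profile \<theta> becomes the list of the first n values,
  and theta_{-i} is that list with entry i removed.  kth_list xs j is the j-th largest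
  entry [xs]_j (1-based), remove_at i xs deletes position i, and pad turns a list
  back into a vector (padded by zeros), the format expected by the mechanism functions.\<close>

definition kth_list :: "real list \<Rightarrow> nat \<Rightarrow> real" where
  "kth_list xs j = rev (sort xs) ! (j - 1)"

definition remove_at :: "nat \<Rightarrow> 'a list \<Rightarrow> 'a list" where
  "remove_at i xs = take i xs @ drop (Suc i) xs"

definition pad :: "real list \<Rightarrow> nat \<Rightarrow> real" where
  "pad xs = (\<lambda>j. if j < length xs then xs ! j else 0)"

lemma kth_list_mset: "mset xs = mset ys \<Longrightarrow> kth_list xs j = kth_list ys j"
  unfolding kth_list_def by (metis properties_for_sort mset_sort sorted_sort)

lemma length_remove_at: "i < length xs \<Longrightarrow> length (remove_at i xs) = length xs - 1"
  unfolding remove_at_def by simp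

lemma mset_remove_at: "i < length xs \<Longrightarrow> mset (remove_at i xs) = mset xs - {#xs ! i#}"
  unfolding remove_at_def by (metis add_mset_remove_trivial id_take_nth_drop mset.simps(2)
      mset_append union_mset_add_mset_right)

lemma set_remove_at: "set (remove_at i xs) \<subseteq> set xs"
  unfolding remove_at_def by (auto dest: in_set_takeD in_set_dropD)

lemma remove_at_last: "remove_at (length ys) (ys @ [p]) = ys"
  unfolding remove_at_def by simp

lemma mset_remove_at_snoc:
  assumes i: "i < length ys"
  shows "mset (remove_at i (ys @ [p])) = mset (ys[i := p])"
proof -
  obtain M where M: "mset ys = add_mset (ys ! i) M"
    using i by (metis insert_DiffM nth_mem_mset)
  have "mset (remove_at i (ys @ [p])) = add_mset p (mset ys) - {#ys ! i#}"
    using mset_remove_at[of i "ys @ [p]"] i by (simp add: nth_append)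
  also have "\<dots> = mset (ys[i := p])"
    using mset_update[OF i, of p] M by (simp add: add_mset_commute)
  finally show ?thesis .
qed

lemma others_pad:
  assumes "i < n"
  shows "others n i \<theta> = pad (remove_at i (map \<theta> [0..<n]))"
  using assms unfolding others_def pad_def remove_at_def
  by (auto simp: nth_append min_def fun_eq_iff)

lemma map_pad: "map (pad xs) [0..<length xs] = xs"
  unfolding pad_def by (rule nth_equalityI) auto

lemma kth_largest_others:
  assumes "i < n"
  shows "kth_largest (others n i \<theta>) (n - 1) j = kth_list (remove_at i (map \<theta> [0..<n])) j"
  using map_pad[of "remove_at i (map \<theta> [0..<n])"] assms
  unfolding kth_largest_def kth_list_def by (simp add: others_pad length_remove_at)

lemma length_filter_mono: "(\<And>x. P x \<Longrightarrow> Q x) \<Longrightarrow> length (filter P xs) \<le> length (filter Q xs)"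
  by (induction xs) auto

lemma length_filter_update:
  "i < length xs \<Longrightarrow> length (filter P (xs[i := v])) + (if P (xs ! i) then 1 else 0)
     = length (filter P xs) + (if P v then 1 else 0)"
proof (induction xs arbitrary: i)
  case (Cons a xs)
  then show ?case by (cases i) auto
qed simp

lemma kth_list_nth: "1 \<le> j \<Longrightarrow> j \<le> length xs \<Longrightarrow> kth_list xs j = sort xs ! (length xs - j)"
  unfolding kth_list_def by (simp add: rev_nth Suc_diff_le)

lemma kth_list_in: "1 \<le> j \<Longrightarrow> j \<le> length xs \<Longrightarrow> kth_list xs j \<in> set xs"
  using kth_list_nth[of j xs] nth_mem[of "length xs - j" "sort xs"] by simp

lemma kth_list_count:
  assumes j: "1 \<le> j" "j \<le> length xs"
  shows "length (filter (\<lambda>x. kth_list xs j < x) xs) < j"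
    and "j \<le> length (filter (\<lambda>x. kth_list xs j \<le> x) xs)"
proof -
  define s where "s = sort xs"
  define q where "q = length xs - j"
  have s: "length s = length xs" "sorted s" "mset s = mset xs" by (simp_all add: s_def)
  have q: "q < length s" "length (drop (Suc q) s) = j - 1" "length (drop q s) = j"
    using j s(1) by (auto simp: q_def)
  have piv: "kth_list xs j = s ! q" using kth_list_nth[OF j] by (simp add: s_def q_def)
  have count: "length (filter P xs) = length (filter P s)" for P
    using s(3) by (metis mset_filter size_mset)
  have below: "x \<le> s ! q" if "x \<in> set (take (Suc q) s)" for x
    using that s(2) q(1) by (auto simp: in_set_conv_nth sorted_nth_mono)
  have above: "s ! q \<le> x" if "x \<in> set (drop q s)" for x
    using that s(2) q(1) by (auto simp: in_set_conv_nth sorted_nth_mono)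
  have "length (filter (\<lambda>x. s ! q < x) s) = length (filter (\<lambda>x. s ! q < x) (drop (Suc q) s))"
    using below by (subst append_take_drop_id[symmetric, of _ "Suc q"], subst filter_append)
      (fastforce simp: filter_empty_conv)
  also have "\<dots> \<le> j - 1" using length_filter_le q(2) by metis
  finally show "length (filter (\<lambda>x. kth_list xs j < x) xs) < j"
    using j piv count by simp
  have "j = length (filter (\<lambda>x. s ! q \<le> x) (drop q s))"
    using above q(3) by simp
  also have "\<dots> \<le> length (filter (\<lambda>x. s ! q \<le> x) s)"
    by (subst (2) append_take_drop_id[symmetric, of _ q], subst filter_append) simp
  finally show "j \<le> length (filter (\<lambda>x. kth_list xs j \<le> x) xs)"
    using piv count by simp
qed

lemma kth_list_unique:
  assumes j: "1 \<le> j" "j \<le> length xs"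
    and "length (filter (\<lambda>x. v < x) xs) < j" and "j \<le> length (filter (\<lambda>x. v \<le> x) xs)"
  shows "kth_list xs j = v"
proof (rule ccontr)
  let ?w = "kth_list xs j"
  assume "?w \<noteq> v"
  then consider "?w < v" | "v < ?w" by linarith
  then show False
  proof cases
    case 1
    then have "length (filter (\<lambda>x. v \<le> x) xs) \<le> length (filter (\<lambda>x. ?w < x) xs)"
      by (intro length_filter_mono) auto
    then show False using kth_list_count[OF j] assms by linarith
  next
    case 2
    then have "length (filter (\<lambda>x. ?w \<le> x) xs) \<le> length (filter (\<lambda>x. v < x) xs)"
      by (intro length_filter_mono) auto
    then show False using kth_list_count[OF j] assms by linarith
  qed
qed

lemma kth_list_snoc_self:
  assumes j: "1 \<le> j" "j \<le> length ys"
  shows "kth_list (ys @ [kth_list ys j]) j = kth_list ys j"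
    and "kth_list (ys @ [kth_list ys j]) (Suc j) = kth_list ys j"
  using kth_list_count[OF j] j by (auto intro!: kth_list_unique)

lemma kth_list_update_self:
  assumes j: "1 \<le> j" "j \<le> length ys" and i: "i < length ys"
  shows "kth_list (ys[i := kth_list ys j]) j = kth_list ys j"
proof (rule kth_list_unique)
  let ?p = "kth_list ys j"
  show "length (filter (\<lambda>x. ?p < x) (ys[i := ?p])) < j"
    using length_filter_update[OF i, of "\<lambda>x. ?p < x" ?p] kth_list_count(1)[OF j]
    by (auto split: if_splits)
  show "j \<le> length (filter (\<lambda>x. ?p \<le> x) (ys[i := ?p]))"
    using length_filter_update[OF i, of "\<lambda>x. ?p \<le> x" ?p] kth_list_count(2)[OF j]
    by (auto split: if_splits)
qed (use j in simp_all)

lemma kth_list_first_max: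
  assumes x: "x \<in> set xs" and max: "\<forall>y\<in>set xs. y \<le> x"
  shows "kth_list xs 1 = x"
proof (rule kth_list_unique)
  show "1 \<le> length xs" using length_pos_if_in_set[OF x] by linarith
  show "length (filter (\<lambda>y. x < y) xs) < 1" using max by (simp add: filter_empty_conv not_less)
  have "x \<in> set (filter (\<lambda>y. x \<le> y) xs)" using x by simp
  from length_pos_if_in_set[OF this] show "1 \<le> length (filter (\<lambda>y. x \<le> y) xs)" by linarith
qed simp

lemma kth_list_last_min:
  assumes x: "x \<in> set xs" and min: "\<forall>y\<in>set xs. x \<le> y"
  shows "kth_list xs (length xs) = x"
proof (rule kth_list_unique)
  show "1 \<le> length xs" using length_pos_if_in_set[OF x] by linarith
  show "length (filter (\<lambda>y. x < y) xs) < length xs" using x by (intro length_filter_less) auto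
  show "length xs \<le> length (filter (\<lambda>y. x \<le> y) xs)" using min by simp
qed simp

lemma kth_list_desc: "sorted_wrt (\<ge>) zs \<Longrightarrow> 1 \<le> j \<Longrightarrow> kth_list zs j = zs ! (j - 1)"
proof -
  assume "sorted_wrt (\<ge>) zs" "1 \<le> j"
  then have "sort zs = rev zs" by (intro properties_for_sort) (auto simp: sorted_wrt_rev)
  then show ?thesis unfolding kth_list_def by simp
qed

lemma sorted_desc_remove_at:
  assumes "sorted_wrt (\<ge>) zs"
  shows "sorted_wrt (\<ge>) (remove_at i zs)"
proof -
  have "sorted_wrt (\<ge>) (take i zs @ drop i zs)" using assms by simp
  moreover have "set (drop (Suc i) zs) \<subseteq> set (drop i zs)"
    by (rule set_drop_subset_set_drop) simp
  ultimately show ?thesis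
    using sorted_wrt_drop[OF assms, of "Suc i"] unfolding remove_at_def sorted_wrt_append by blast
qed

text \<open>Efficiency: with unit demand, the best allocation of m units gives the units to the
  m highest bidders, so every maximum of the form used by VCG is the sum of the m largest
  entries.\<close>

definition top_sum :: "nat \<Rightarrow> real list \<Rightarrow> real" where
  "top_sum m xs = (\<Sum>j=1..m. kth_list xs j)"

lemma top_sum_mset: "mset xs = mset ys \<Longrightarrow> top_sum m xs = top_sum m ys"
  unfolding top_sum_def by (intro sum.cong refl kth_list_mset)

text \<open>Exchange argument: for a non-increasing sequence, any m of its first N terms sum to at
  most the first m terms.\<close>

lemma subset_sum_le_prefix_sum:
  fixes y :: "nat \<Rightarrow> real"
  assumes d: "d \<subseteq> {..<N}" "card d = m" and mono: "\<And>a b. a \<le> b \<Longrightarrow> b < N \<Longrightarrow> y b \<le> y a"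
  shows "(\<Sum>t\<in>d. y t) \<le> (\<Sum>t<m. y t)"
proof (cases "m = 0")
  case True
  then have "d = {}" using d finite_subset by fastforce
  then show ?thesis using True by simp
next
  case False
  define M where "M = {..<m}"
  have fd: "finite d" using d finite_subset by blast
  have "m \<le> N" using d card_mono[of "{..<N}" d] by auto
  have same_card: "card (d - M) = card (M - d)"
    using card_Diff_subset_Int[of d M] card_Diff_subset_Int[of M d] fd d
    by (simp add: M_def Int_commute)
  have "(\<Sum>t\<in>d - M. y t) \<le> of_nat (card (d - M)) * y (m - 1)"
  proof (rule sum_bounded_above)
    fix t assume "t \<in> d - M"
    then show "y t \<le> y (m - 1)" using d mono by (auto simp: M_def)
  qed
  also have "\<dots> \<le> (\<Sum>t\<in>M - d. y t)"
    unfolding same_card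
  proof (rule sum_bounded_below)
    fix t assume "t \<in> M - d"
    then show "y (m - 1) \<le> y t" using \<open>m \<le> N\<close> False mono by (auto simp: M_def)
  qed
  finally show ?thesis
    using sum.Int_Diff[OF fd, of y M] sum.Int_Diff[of M y d] by (simp add: M_def Int_commute)
qed

lemma top_sum_is_max_subset_sum:
  fixes x :: "nat \<Rightarrow> real"
  assumes dis: "distinct ixs" and m: "m \<le> length ixs"
  shows "\<And>d. d \<subseteq> set ixs \<Longrightarrow> card d = m \<Longrightarrow> (\<Sum>j\<in>d. x j) \<le> top_sum m (map x ixs)"
    and "\<exists>d. d \<subseteq> set ixs \<and> card d = m \<and> (\<Sum>j\<in>d. x j) = top_sum m (map x ixs)"
proof -
  define js where "js = sort_key (\<lambda>j. - x j) ixs"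
  define N where "N = length ixs"
  have js: "mset js = mset ixs" "distinct js" "set js = set ixs" "length js = N"
    using dis by (simp_all add: js_def N_def)
  have "sorted (map (\<lambda>j. - x j) js)" by (simp add: js_def)
  then have desc: "sorted_wrt (\<ge>) (map x js)" by (simp add: sorted_wrt_map)
  have "top_sum m (map x ixs) = top_sum m (map x js)"
    using top_sum_mset js(1) by (metis mset_map)
  also have "\<dots> = (\<Sum>j=1..m. x (js ! (j - 1)))"
    unfolding top_sum_def using kth_list_desc[OF desc] m js(4) N_def by (intro sum.cong) auto
  also have "\<dots> = (\<Sum>t<m. x (js ! t))" by (simp add: sum.atLeast1_atMost_eq)
  finally have top: "top_sum m (map x ixs) = (\<Sum>t<m. x (js ! t))" .
  have inj: "inj_on (nth js) {..<N}" using js by (simp add: inj_on_nth)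
  have mono: "\<And>a b. a \<le> b \<Longrightarrow> b < N \<Longrightarrow> x (js ! b) \<le> x (js ! a)"
    using desc js(4) by (auto simp: sorted_wrt_iff_nth_less le_less)
  show "(\<Sum>j\<in>d. x j) \<le> top_sum m (map x ixs)" if d: "d \<subseteq> set ixs" "card d = m" for d
  proof -
    define d' where "d' = {t. t < N \<and> js ! t \<in> d}"
    have img: "nth js ` d' = d"
    proof
      show "d \<subseteq> nth js ` d'"
      proof
        fix j assume "j \<in> d"
        then have "j \<in> set js" using d js(3) by auto
        then obtain t where "t < N" "js ! t = j" using js(4) by (auto simp: in_set_conv_nth)
        then show "j \<in> nth js ` d'" using \<open>j \<in> d\<close> by (auto simp: d'_def)
      qed
    qed (auto simp: d'_def)
    have inj': "inj_on (nth js) d'" using inj by (rule inj_on_subset) (auto simp: d'_def)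
    have "(\<Sum>j\<in>d. x j) = (\<Sum>t\<in>d'. x (js ! t))"
      using sum.reindex[OF inj', of x] img by simp
    also have "\<dots> \<le> (\<Sum>t<m. x (js ! t))"
    proof (rule subset_sum_le_prefix_sum[where N=N])
      show "d' \<subseteq> {..<N}" by (auto simp: d'_def)
      show "card d' = m" using card_image[OF inj'] img d by simp
    qed (rule mono)
    finally show ?thesis using top by simp
  qed
  have inj_m: "inj_on (nth js) {..<m}" using inj by (rule inj_on_subset) (use m N_def in auto)
  show "\<exists>d. d \<subseteq> set ixs \<and> card d = m \<and> (\<Sum>j\<in>d. x j) = top_sum m (map x ixs)"
  proof (intro exI conjI)
    have "m \<le> length js" using js(4) m N_def by simp
    then show "nth js ` {..<m} \<subseteq> set ixs" unfolding js(3)[symmetric] by auto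
    show "card (nth js ` {..<m}) = m" using card_image[OF inj_m] by simp
    show "(\<Sum>j\<in>nth js ` {..<m}. x j) = top_sum m (map x ixs)"
      using sum.reindex[OF inj_m, of x] top by simp
  qed
qed

lemma sum_val: "finite S \<Longrightarrow> d \<subseteq> S \<Longrightarrow> (\<Sum>j\<in>S. val d j (\<theta> j)) = (\<Sum>j\<in>d. \<theta> j)"
  unfolding val_def by (simp add: sum.If_cases Int_absorb1)

lemma vcg_max_eq_top_sum:
  assumes i: "i < n" and m: "m \<le> n - 1"
  shows "Max ((\<lambda>d. \<Sum>j\<in>{0..<n}-{i}. val d j (\<theta> j)) ` {d \<in> decisions n m. i \<notin> d})
       = top_sum m (remove_at i (map \<theta> [0..<n]))"
proof -
  define ixs where "ixs = remove_at i [0..<n]"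
  have ixs: "distinct ixs" "set ixs = {0..<n} - {i}" "m \<le> length ixs"
  proof -
    have "ixs = [0..<i] @ [Suc i..<n]" using i by (simp add: ixs_def remove_at_def)
    then show "distinct ixs" "set ixs = {0..<n} - {i}" "m \<le> length ixs" using i m by auto
  qed
  have map_is: "map \<theta> ixs = remove_at i (map \<theta> [0..<n])"
    unfolding ixs_def remove_at_def by (simp add: take_map drop_map)
  note upper = top_sum_is_max_subset_sum(1)[OF ixs(1,3), of _ \<theta>]
    and attained = top_sum_is_max_subset_sum(2)[OF ixs(1,3), of \<theta>]
  let ?F = "\<lambda>d. \<Sum>j\<in>{0..<n}-{i}. val d j (\<theta> j)"
  have D: "{d \<in> decisions n m. i \<notin> d} = {d. d \<subseteq> set ixs \<and> card d = m}"
    unfolding decisions_def ixs(2) by auto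
  have F: "\<And>d. d \<subseteq> set ixs \<Longrightarrow> ?F d = (\<Sum>j\<in>d. \<theta> j)"
    using sum_val[of "{0..<n}-{i}"] unfolding ixs(2) by auto
  have fin: "finite (?F ` {d \<in> decisions n m. i \<notin> d})"
  proof -
    have "{d. d \<subseteq> set ixs \<and> card d = m} \<subseteq> Pow (set ixs)" by auto
    then show ?thesis unfolding D by (meson finite_Pow_iff finite_imageI finite_set finite_subset)
  qed
  have "Max (?F ` {d \<in> decisions n m. i \<notin> d}) = top_sum m (map \<theta> ixs)"
  proof (rule Max_eqI[OF fin])
    show "y \<le> top_sum m (map \<theta> ixs)" if "y \<in> ?F ` {d \<in> decisions n m. i \<notin> d}" for y
      using that upper F unfolding D by auto
    obtain d where "d \<subseteq> set ixs" "card d = m" "(\<Sum>j\<in>d. \<theta> j) = top_sum m (map \<theta> ixs)"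
      using attained by blast
    then show "top_sum m (map \<theta> ixs) \<in> ?F ` {d \<in> decisions n m. i \<notin> d}"
      unfolding D using F by (metis (mono_tags, lifting) image_eqI mem_Collect_eq)
  qed
  then show ?thesis using map_is by simp
qed

lemma efficient_welfare_eq_top_sum:
  assumes eff: "efficient n m L U f" and th: "\<theta> \<in> profiles n L U" and m: "m \<le> n"
  shows "(\<Sum>j<n. val (f \<theta>) j (\<theta> j)) = top_sum m (map \<theta> [0..<n])"
proof -
  note upper = top_sum_is_max_subset_sum(1)[of "[0..<n]" m _ \<theta>]
    and attained = top_sum_is_max_subset_sum(2)[of "[0..<n]" m \<theta>]
  have fd: "f \<theta> \<in> decisions n m"
    and opt: "\<And>d. d \<in> decisions n m \<Longrightarrow> (\<Sum>j<n. val d j (\<theta> j)) \<le> (\<Sum>j<n. val (f \<theta>) j (\<theta> j))"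
    using eff th unfolding efficient_def by auto
  have F: "\<And>d. d \<subseteq> {0..<n} \<Longrightarrow> (\<Sum>j<n. val d j (\<theta> j)) = (\<Sum>j\<in>d. \<theta> j)"
    using sum_val[of "{0..<n}"] by (simp add: atLeast0LessThan)
  have "(\<Sum>j<n. val (f \<theta>) j (\<theta> j)) \<le> top_sum m (map \<theta> [0..<n])"
    using upper fd F m unfolding decisions_def by auto
  moreover obtain d where d: "d \<subseteq> {0..<n}" "card d = m" "(\<Sum>j\<in>d. \<theta> j) = top_sum m (map \<theta> [0..<n])"
    using attained m by auto
  then have "top_sum m (map \<theta> [0..<n]) \<le> (\<Sum>j<n. val (f \<theta>) j (\<theta> j))"
    using opt[of d] F unfolding decisions_def by auto
  ultimately show ?thesis by simp
qed

text \<open>Identities for the OEL constants: alpha_m = 1 and the two-term recurrences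
  j c_j + (n - j - 1) c_{j+1} = 0 satisfied by alpha on [1, m) and by beta on [m+1, n-1),
  plus the starting value of beta.  They are consequences of the absorption identities
  for binomial coefficients.\<close>

lemma binomial_step: "Suc k * (M choose Suc k) = (M - k) * (M choose k)"
  using times_binomial_minus1_eq[of "Suc k" M] binomial_absorb_comp[of M k] by simp

lemma alpha_last: "alpha n m m = 1"
  unfolding alpha_def by simp

lemma alpha_rec:
  assumes j: "1 \<le> j" "j < m" and mn: "m \<le> n - 1"
  shows "real j * alpha n m j + (real n - real j - 1) * alpha n m (Suc j) = 0"
proof -
  define K where "K = n - m - 1"
  define s :: real where "s = (-1) ^ (m - Suc j)"
  define A where "A = real ((n - j - 1) choose K)"
  define B where "B = real ((m - 1) choose (j - 1))"
  define C where "C = real ((n - Suc j - 1) choose K)"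
  define D where "D = real ((m - 1) choose j)"
  have pos: "B > 0" "D > 0" using j unfolding B_def D_def by simp_all
  have "(n - j - 1 - K) * ((n - j - 1) choose K) = (n - j - 1) * ((n - Suc j - 1) choose K)"
    using binomial_absorb_comp[of "n - j - 1" K] by (simp add: diff_Suc)
  moreover have "n - j - 1 - K = m - j" "real (n - j - 1) = real n - real j - 1"
    using j mn by (auto simp: K_def of_nat_diff)
  ultimately have AC: "(real n - real j - 1) * C = real (m - j) * A"
    unfolding A_def C_def by (metis of_nat_mult)
  have "j * ((m - 1) choose j) = (m - j) * ((m - 1) choose (j - 1))"
    using binomial_step[of "j - 1" "m - 1"] j by simp
  then have BD: "real j * D = real (m - j) * B"
    unfolding B_def D_def by (metis of_nat_mult)
  have "(-1::real) ^ (m - j) = - s"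
    using j by (simp add: s_def Suc_diff_Suc[symmetric])
  then have alpha_j: "alpha n m j = - s * A / B" and alpha_Suc: "alpha n m (Suc j) = s * C / D"
    unfolding alpha_def A_def B_def C_def D_def K_def s_def by simp_all
  have "real j * alpha n m j + (real n - real j - 1) * alpha n m (Suc j)
      = s * ((real n - real j - 1) * C * B - real j * D * A) / (B * D)"
    unfolding alpha_j alpha_Suc using pos by (simp add: field_simps)
  also have "\<dots> = 0" unfolding AC BD by simp
  finally show ?thesis .
qed

lemma beta_first:
  assumes "1 \<le> m" "m + 1 \<le> n - 1"
  shows "(real n - real m - 1) * beta n m (Suc m) = real m"
proof -
  have "(n - m - 1) choose (n - Suc m - 1) = n - m - 1"
  proof -
    have "n - m - 1 = Suc (n - Suc m - 1)" using assms by simp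
    then show ?thesis by (metis binomial_Suc_n)
  qed
  moreover have "m choose (m - 1) = m"
    using binomial_symmetric[of "m - 1" m] assms by simp
  moreover have "real (n - m - 1) = real n - real m - 1" "real n - real m - 1 > 0"
    using assms by (auto simp: of_nat_diff)
  ultimately show ?thesis unfolding beta_def by (simp add: field_simps)
qed

lemma beta_rec:
  assumes b: "m + 1 \<le> b" "b + 1 \<le> n - 1" and m: "1 \<le> m"
  shows "real b * beta n m b + (real n - real b - 1) * beta n m (Suc b) = 0"
proof -
  define M where "M = n - m - 1"
  define s :: real where "s = (-1) ^ (b - m - 1)"
  define A where "A = real ((b - 1) choose (m - 1))"
  define C where "C = real (b choose (m - 1))"
  define D where "D = real (M choose (n - b - 1))"
  define E where "E = real (M choose (n - Suc b - 1))"
  have pos: "D > 0" "E > 0" using b unfolding D_def E_def M_def by simp_all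
  have "(b - (m - 1)) * (b choose (m - 1)) = b * ((b - 1) choose (m - 1))"
    by (rule binomial_absorb_comp)
  moreover have "b - (m - 1) = b - m + 1" using b m by simp
  ultimately have AC: "real b * A = real (b - m + 1) * C"
    unfolding A_def C_def by (metis of_nat_mult)
  have "(n - b - 1) * (M choose (n - b - 1)) = (M - (n - b - 2)) * (M choose (n - b - 2))"
    using binomial_step[of "n - b - 2" M] b by (simp add: Suc_diff_Suc numeral_2_eq_2)
  moreover have "M - (n - b - 2) = b - m + 1" "real (n - b - 1) = real n - real b - 1"
    "n - Suc b - 1 = n - b - 2"
    using b by (auto simp: M_def of_nat_diff)
  ultimately have DE: "(real n - real b - 1) * D = real (b - m + 1) * E"
    unfolding D_def E_def by (metis of_nat_mult)
  have "Suc b - m - 1 = Suc (b - m - 1)" using b by simp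
  then have "(-1::real) ^ (Suc b - m - 1) = - s" by (simp add: s_def)
  then have beta_b: "beta n m b = s * A / D" and beta_Suc: "beta n m (Suc b) = - s * C / E"
    unfolding beta_def A_def C_def D_def E_def M_def s_def by simp_all
  have "real b * beta n m b + (real n - real b - 1) * beta n m (Suc b)
      = s * (real b * A * E - (real n - real b - 1) * D * C) / (D * E)"
    unfolding beta_b beta_Suc using pos by (simp add: field_simps)
  also have "\<dots> = 0" unfolding AC DE by simp
  finally show ?thesis .
qed

text \<open>For a decreasingly sorted profile z = (z_0 \<ge> ... \<ge> z_{n-1}), summing the j-th largest
  entry of z_{-i} over all bidders i gives (n - j) z_{j-1} + j z_j (see sum_kth_list_remove_at).\<close>

definition leave_one_out :: "nat \<Rightarrow> (nat \<Rightarrow> real) \<Rightarrow> nat \<Rightarrow> real" where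
  "leave_one_out n z j = (real n - real j) * z (j - 1) + real j * z j"

text \<open>Abel summation: for weights satisfying the OEL recurrence, a weighted sum of
  leave-one-out sums collapses to its two boundary terms.  Taking z = 1 evaluates the sum
  of the weights themselves.\<close>

lemma leave_one_out_sum_telescopes:
  fixes w z :: "nat \<Rightarrow> real"
  assumes "a \<le> b"
    and rec: "\<And>j. a \<le> j \<Longrightarrow> j < b \<Longrightarrow> real j * w j + (real n - real j - 1) * w (Suc j) = 0"
  shows "(\<Sum>j=a..b. w j * leave_one_out n z j) = (real n - real a) * w a * z (a - 1) + real b * w b * z b"
  using assms(1)
proof (induction b rule: dec_induct)
  case base
  then show ?case by (simp add: leave_one_out_def algebra_simps)
next
  case (step c)
  have "(\<Sum>j=a..Suc c. w j * leave_one_out n z j) = (\<Sum>j=a..c. w j * leave_one_out n z j) + w (Suc c) * leave_one_out n z (Suc c)"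
    using step.hyps by simp
  also have "\<dots> = (real n - real a) * w a * z (a - 1) + real (Suc c) * w (Suc c) * z (Suc c)
      + (real c * w c + (real n - real c - 1) * w (Suc c)) * z c"
    unfolding step.IH by (simp add: leave_one_out_def algebra_simps)
  finally show ?case using rec[of c] step.hyps by simp
qed

lemma weight_sum_telescopes:
  fixes w :: "nat \<Rightarrow> real"
  assumes "a \<le> b"
    and "\<And>j. a \<le> j \<Longrightarrow> j < b \<Longrightarrow> real j * w j + (real n - real j - 1) * w (Suc j) = 0"
  shows "real n * (\<Sum>j=a..b. w j) = (real n - real a) * w a + real b * w b"
proof -
  have "real n * (\<Sum>j=a..b. w j) = (\<Sum>j=a..b. w j * leave_one_out n (\<lambda>_. 1) j)"
    by (simp add: leave_one_out_def sum_distrib_left mult.commute)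
  then show ?thesis using leave_one_out_sum_telescopes[OF assms, of "\<lambda>_. 1"] by simp
qed

text \<open>The alpha-part and the beta-part of an OEL tax, added to the VCG deficit -m z_m, depend on
  a single entry of z only.\<close>

lemma alpha_tail:
  assumes "1 \<le> a" "a \<le> m + 1" "m \<le> n - 1"
  shows "(\<Sum>j=a..m. alpha n m j * leave_one_out n z j) - real m * z m
       = (real n * (\<Sum>j=a..m. alpha n m j) - real m) * z (a - 1)"
proof (cases "a \<le> m")
  case True
  have rec: "\<And>j. a \<le> j \<Longrightarrow> j < m \<Longrightarrow>
      real j * alpha n m j + (real n - real j - 1) * alpha n m (Suc j) = 0"
    using assms by (intro alpha_rec) auto
  have S: "(\<Sum>j=a..m. alpha n m j * leave_one_out n z j) = (real n - real a) * alpha n m a * z (a - 1) + real m * z m"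
    using leave_one_out_sum_telescopes[OF True rec, of z] by (simp add: alpha_last)
  have W: "real n * (\<Sum>j=a..m. alpha n m j) = (real n - real a) * alpha n m a + real m"
    using weight_sum_telescopes[OF True rec] by (simp add: alpha_last)
  show ?thesis by (simp only: S W) (simp add: algebra_simps)
next
  case False
  then have "a = m + 1" using assms by simp
  then show ?thesis by simp
qed

lemma beta_head:
  assumes "1 \<le> m" "m \<le> b" "b \<le> n - 1"
  shows "(\<Sum>j=m+1..b. beta n m j * leave_one_out n z j) - real m * z m
       = (real n * (\<Sum>j=m+1..b. beta n m j) - real m) * z b"
proof (cases "m + 1 \<le> b")
  case True
  have rec: "\<And>j. m + 1 \<le> j \<Longrightarrow> j < b \<Longrightarrow>
      real j * beta n m j + (real n - real j - 1) * beta n m (Suc j) = 0"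
    using assms by (intro beta_rec) auto
  have first: "(real n - real (m + 1)) * beta n m (m + 1) = real m"
    using beta_first[of m n] assms True by (simp add: algebra_simps)
  have S: "(\<Sum>j=m+1..b. beta n m j * leave_one_out n z j) = real m * z m + real b * beta n m b * z b"
    using leave_one_out_sum_telescopes[OF True rec, of z] first by simp
  have W: "real n * (\<Sum>j=m+1..b. beta n m j) = real m + real b * beta n m b"
    using weight_sum_telescopes[OF True rec] first by simp
  show ?thesis by (simp only: S W) (simp add: algebra_simps)
next
  case False
  then have "b = m" using assms by simp
  then show ?thesis by simp
qed

lemma sum_restrict_support:
  fixes f :: "nat \<Rightarrow> real"
  assumes "1 \<le> a" "b \<le> N" and "\<And>j. 1 \<le> j \<Longrightarrow> j \<le> N \<Longrightarrow> j < a \<or> b < j \<Longrightarrow> f j = 0"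
  shows "(\<Sum>j=1..N. f j) = (\<Sum>j=a..b. f j)"
  using assms by (intro sum.mono_neutral_right) auto

text \<open>The algebraic core: the total OEL payment, written as a linear form in the sorted
  profile z, vanishes whenever z lies on the face determined by k, i.e. z_0 = U (k = 0),
  z_{n-1} = L (k = n), or z_{k-1} = z_k (1 \<le> k \<le> n - 1).\<close>

lemma oel_form_vanishes:
  fixes z :: "nat \<Rightarrow> real"
  assumes n: "n \<ge> 2" and m: "1 \<le> m" "m \<le> n - 1" and k: "k \<le> n"
    and zero: "(k = 0 \<longrightarrow> z 0 = U) \<and> (k = n \<longrightarrow> z (n - 1) = L)
      \<and> (1 \<le> k \<and> k \<le> n - 1 \<longrightarrow> z (k - 1) = z k)"
  shows "real n * oel_c n m L U k 0 + (\<Sum>j=1..n-1. oel_c n m L U k j * leave_one_out n z j) - real m * z m = 0"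
proof -
  let ?c = "oel_c n m L U k"
  have npos: "real n > 0" using n by simp
  have not_below: "\<not> k \<le> k - 1" if "k > 0" for k :: nat using that by simp
  consider (top) "k = 0" | (upper) "1 \<le> k" "k \<le> m" | (lower) "m + 1 \<le> k" "k \<le> n - 1"
    | (bottom) "k = n"
    using k m by linarith
  then show ?thesis
  proof cases
    case top
    define Q where "Q = real n * (\<Sum>j=1..m. alpha n m j) - real m"
    have "(\<Sum>j=1..n-1. ?c j * leave_one_out n z j) = (\<Sum>j=1..m. ?c j * leave_one_out n z j)"
      using m top by (intro sum_restrict_support) (auto simp: oel_c_def)
    also have "\<dots> = (\<Sum>j=1..m. alpha n m j * leave_one_out n z j)"
      using top by (intro sum.cong) (auto simp: oel_c_def)
    finally have "(\<Sum>j=1..n-1. ?c j * leave_one_out n z j) - real m * z m = Q * z 0"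
      using alpha_tail[of 1 m n z] m unfolding Q_def by simp
    moreover have "real n * ?c 0 = - U * Q"
      unfolding oel_c_def Q_def using top npos by (simp add: field_simps)
    ultimately show ?thesis using zero top by (simp add: algebra_simps)
  next
    case upper
    define Q where "Q = real n * (\<Sum>j=k+1..m. alpha n m j) - real m"
    have "(\<Sum>j=1..n-1. ?c j * leave_one_out n z j) = (\<Sum>j=k..m. ?c j * leave_one_out n z j)"
      using m upper by (intro sum_restrict_support) (auto simp: oel_c_def)
    also have "\<dots> = ?c k * leave_one_out n z k + (\<Sum>j=k+1..m. alpha n m j * leave_one_out n z j)"
      using upper by (simp add: sum.atLeast_Suc_atMost oel_c_def)
    finally have "(\<Sum>j=1..n-1. ?c j * leave_one_out n z j) - real m * z m = ?c k * leave_one_out n z k + Q * z k"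
      using alpha_tail[of "k + 1" m n z] m upper unfolding Q_def by simp
    moreover have "?c k = - Q / real n" "?c 0 = 0"
      unfolding oel_c_def Q_def using upper npos by (simp_all add: field_simps)
    ultimately show ?thesis using zero upper m npos by (simp add: leave_one_out_def field_simps)
  next
    case lower
    define Q where "Q = real n * (\<Sum>j=m+1..k-1. beta n m j) - real m"
    have "(\<Sum>j=1..n-1. ?c j * leave_one_out n z j) = (\<Sum>j=m+1..k. ?c j * leave_one_out n z j)"
      using m lower by (intro sum_restrict_support) (auto simp: oel_c_def)
    also have "\<dots> = (\<Sum>j=m+1..k-1. beta n m j * leave_one_out n z j) + ?c k * leave_one_out n z k"
    proof -
      have "{m+1..k} = insert k {m+1..k-1}" "k \<notin> {m+1..k-1}" using lower by auto
      moreover have "(\<Sum>j=m+1..k-1. ?c j * leave_one_out n z j) = (\<Sum>j=m+1..k-1. beta n m j * leave_one_out n z j)"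
        using lower by (intro sum.cong) (auto simp: oel_c_def)
      ultimately show ?thesis by (simp add: add.commute)
    qed
    finally have "(\<Sum>j=1..n-1. ?c j * leave_one_out n z j) - real m * z m = Q * z (k - 1) + ?c k * leave_one_out n z k"
      using beta_head[of m "k - 1" n z] m lower unfolding Q_def by simp
    moreover have "?c k = - Q / real n" "?c 0 = 0"
      unfolding oel_c_def Q_def using lower m npos not_below[of k] by (simp_all add: field_simps)
    ultimately show ?thesis using zero lower m npos by (simp add: leave_one_out_def field_simps)
  next
    case bottom
    define Q where "Q = real n * (\<Sum>j=m+1..n-1. beta n m j) - real m"
    have "(\<Sum>j=1..n-1. ?c j * leave_one_out n z j) = (\<Sum>j=m+1..n-1. ?c j * leave_one_out n z j)"
      using m n bottom by (intro sum_restrict_support) (auto simp: oel_c_def)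
    also have "\<dots> = (\<Sum>j=m+1..n-1. beta n m j * leave_one_out n z j)"
      using m n bottom by (intro sum.cong) (auto simp: oel_c_def)
    finally have "(\<Sum>j=1..n-1. ?c j * leave_one_out n z j) - real m * z m = Q * z (n - 1)"
      using beta_head[of m "n - 1" n z] m unfolding Q_def by simp
    moreover have "real n * ?c 0 = - L * Q"
      unfolding oel_c_def Q_def using bottom m n npos not_below[of n] by (simp add: field_simps)
    ultimately show ?thesis using zero bottom n by (simp add: algebra_simps)
  qed
qed

text \<open>oel_adjust is the OEL correction c_0 + \<Sum> c_j [x]_j added to the VCG tax, and oel_budget
  is the total OEL payment written as a function of the list of all types (see
  sum_oel_tax_eq_budget).\<close>

definition oel_adjust :: "nat \<Rightarrow> nat \<Rightarrow> real \<Rightarrow> real \<Rightarrow> nat \<Rightarrow> real list \<Rightarrow> real" where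
  "oel_adjust n m L U k xs = oel_c n m L U k 0 + (\<Sum>j=1..n-1. oel_c n m L U k j * kth_list xs j)"

definition oel_budget :: "nat \<Rightarrow> nat \<Rightarrow> real \<Rightarrow> real \<Rightarrow> nat \<Rightarrow> real list \<Rightarrow> real" where
  "oel_budget n m L U k xs = (real n - 1) * top_sum m xs - (\<Sum>i<n. top_sum m (remove_at i xs))
     + (\<Sum>i<n. oel_adjust n m L U k (remove_at i xs))"

lemma oel_adjust_mset: "mset xs = mset ys \<Longrightarrow> oel_adjust n m L U k xs = oel_adjust n m L U k ys"
  unfolding oel_adjust_def by (simp add: kth_list_mset[of xs ys])

lemma sum_remove_at_mset:
  assumes mx: "mset xs = mset ys" and F: "\<And>a b. mset a = mset b \<Longrightarrow> F a = (F b :: real)"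
  shows "(\<Sum>i<length xs. F (remove_at i xs)) = (\<Sum>i<length ys. F (remove_at i ys))"
proof -
  obtain p where p: "p permutes {..<length ys}" "permute_list p ys = xs"
    using mset_eq_permutation[OF mx] by blast
  have len: "length xs = length ys" using mx by (metis size_mset)
  have "F (remove_at i xs) = F (remove_at (p i) ys)" if i: "i < length ys" for i
  proof (rule F)
    have "p i < length ys" using permutes_in_image[OF p(1), of i] i by simp
    moreover have "xs ! i = ys ! p i" using p i permute_list_nth by metis
    ultimately show "mset (remove_at i xs) = mset (remove_at (p i) ys)"
      using mset_remove_at[of i xs] mset_remove_at[of "p i" ys] i len mx by simp
  qed
  then have "(\<Sum>i<length xs. F (remove_at i xs)) = (\<Sum>i<length ys. F (remove_at (p i) ys))"
    using len by (intro sum.cong) auto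
  also have "\<dots> = (\<Sum>i<length ys. F (remove_at i ys))"
    using sum.permute[OF p(1), of "\<lambda>i. F (remove_at i ys)"] by (simp add: comp_def)
  finally show ?thesis .
qed

lemma oel_budget_mset:
  assumes ms: "mset xs = mset ys" and len: "length xs = n"
  shows "oel_budget n m L U k xs = oel_budget n m L U k ys"
proof -
  have "length ys = n" using ms len by (metis size_mset)
  then have "(\<Sum>i<n. top_sum m (remove_at i xs)) = (\<Sum>i<n. top_sum m (remove_at i ys))"
    and "(\<Sum>i<n. oel_adjust n m L U k (remove_at i xs)) = (\<Sum>i<n. oel_adjust n m L U k (remove_at i ys))"
    using sum_remove_at_mset[OF ms, of "top_sum m", OF top_sum_mset]
      sum_remove_at_mset[OF ms, of "oel_adjust n m L U k", OF oel_adjust_mset] len by simp_all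
  then show ?thesis unfolding oel_budget_def using top_sum_mset[OF ms] by simp
qed

lemma sum_kth_list_remove_at:
  assumes desc: "sorted_wrt (\<ge>) zs" and n: "length zs = n" and j: "1 \<le> j" "j \<le> n - 1"
  shows "(\<Sum>i<n. kth_list (remove_at i zs) j) = leave_one_out n (nth zs) j"
proof -
  have "kth_list (remove_at i zs) j = (if j \<le> i then zs ! (j - 1) else zs ! j)" if "i < n" for i
    using kth_list_desc[OF sorted_desc_remove_at[OF desc] j(1)] that j n
    unfolding remove_at_def by (auto simp: nth_append min_def)
  then have "(\<Sum>i<n. kth_list (remove_at i zs) j) = (\<Sum>i<n. if j \<le> i then zs ! (j - 1) else zs ! j)"
    by (intro sum.cong) auto
  also have "\<dots> = (\<Sum>i\<in>{0..<j}. if j \<le> i then zs ! (j - 1) else zs ! j)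
      + (\<Sum>i\<in>{j..<n}. if j \<le> i then zs ! (j - 1) else zs ! j)"
    unfolding atLeast0LessThan[symmetric] using j
    by (intro sum.atLeastLessThan_concat[symmetric]) auto
  also have "\<dots> = (\<Sum>i\<in>{0..<j}. zs ! j) + (\<Sum>i\<in>{j..<n}. zs ! (j - 1))"
    by (intro arg_cong2[where f="(+)"] sum.cong) auto
  also have "\<dots> = leave_one_out n (nth zs) j"
    unfolding leave_one_out_def using j by (simp add: of_nat_diff algebra_simps)
  finally show ?thesis .
qed

text \<open>Summed over bidders, the VCG taxes telescope to -m z_m (the familiar VCG deficit).\<close>

lemma top_sum_leave_one_out_telescope:
  "(real n - 1) * (\<Sum>j=1..M. z (j - 1)) - (\<Sum>j=1..M. leave_one_out n z j) = - real M * z M"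
  by (induction M) (auto simp: leave_one_out_def algebra_simps)

lemma oel_budget_desc:
  assumes desc: "sorted_wrt (\<ge>) zs" and n: "length zs = n" "n \<ge> 2" and m: "1 \<le> m" "m \<le> n - 1"
  shows "oel_budget n m L U k zs = real n * oel_c n m L U k 0
     + (\<Sum>j=1..n-1. oel_c n m L U k j * leave_one_out n (nth zs) j) - real m * zs ! m"
proof -
  let ?z = "nth zs" and ?c = "oel_c n m L U k"
  have "top_sum m zs = (\<Sum>j=1..m. ?z (j - 1))"
    unfolding top_sum_def using kth_list_desc[OF desc] by simp
  moreover have "(\<Sum>i<n. top_sum m (remove_at i zs)) = (\<Sum>j=1..m. leave_one_out n ?z j)"
    unfolding top_sum_def
    by (subst sum.swap) (use sum_kth_list_remove_at[OF desc n(1)] m in auto)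
  moreover have "(\<Sum>i<n. oel_adjust n m L U k (remove_at i zs))
      = real n * ?c 0 + (\<Sum>j=1..n-1. ?c j * leave_one_out n ?z j)"
  proof -
    have "(\<Sum>i<n. \<Sum>j=1..n-1. ?c j * kth_list (remove_at i zs) j)
        = (\<Sum>j=1..n-1. ?c j * (\<Sum>i<n. kth_list (remove_at i zs) j))"
      by (subst sum.swap) (simp add: sum_distrib_left)
    also have "\<dots> = (\<Sum>j=1..n-1. ?c j * leave_one_out n ?z j)"
      using sum_kth_list_remove_at[OF desc n(1)] by (intro sum.cong) auto
    finally show ?thesis unfolding oel_adjust_def by (simp add: sum.distrib)
  qed
  ultimately show ?thesis
    unfolding oel_budget_def using top_sum_leave_one_out_telescope[of n ?z m] by (simp add: algebra_simps)
qed

lemma oel_budget_zero: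
  assumes n: "n \<ge> 2" and m: "1 \<le> m" "m \<le> n - 1" and k: "k \<le> n" and len: "length xs = n"
    and zero: "(k = 0 \<longrightarrow> kth_list xs 1 = U) \<and> (k = n \<longrightarrow> kth_list xs n = L)
      \<and> (1 \<le> k \<and> k \<le> n - 1 \<longrightarrow> kth_list xs k = kth_list xs (k + 1))"
  shows "oel_budget n m L U k xs = 0"
proof -
  define zs where "zs = rev (sort xs)"
  have desc: "sorted_wrt (\<ge>) zs" unfolding zs_def by (simp add: sorted_wrt_rev)
  have ms: "mset zs = mset xs" and lz: "length zs = n" using len by (simp_all add: zs_def)
  have kth: "\<And>j. 1 \<le> j \<Longrightarrow> kth_list xs j = zs ! (j - 1)"
    using kth_list_mset[OF ms] kth_list_desc[OF desc] by metis
  have "oel_budget n m L U k xs = oel_budget n m L U k zs"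
    using oel_budget_mset[OF ms[symmetric] len] .
  also have "\<dots> = 0"
    unfolding oel_budget_desc[OF desc lz n m]
    using zero kth[of 1] kth[of n] kth[of k] kth[of "k+1"] n
    by (intro oel_form_vanishes[OF n m k]) auto
  finally show ?thesis .
qed

lemma sum_over_others:
  fixes v :: "nat \<Rightarrow> real"
  shows "(\<Sum>i<n. \<Sum>j\<in>{0..<n}-{i}. v j) = (real n - 1) * (\<Sum>j<n. v j)"
proof -
  have "(\<Sum>i<n. \<Sum>j\<in>{0..<n}-{i}. v j) = (\<Sum>i<n. (\<Sum>j<n. v j) - v i)"
    by (intro sum.cong) (auto simp: sum_diff1 atLeast0LessThan)
  then show ?thesis by (simp add: sum_subtractf algebra_simps)
qed

lemma oel_tax_list:
  assumes i: "i < n" and m: "m \<le> n - 1"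
  shows "oel_tax n m L U k f i \<theta> = (\<Sum>j\<in>{0..<n}-{i}. val (f \<theta>) j (\<theta> j))
     - top_sum m (remove_at i (map \<theta> [0..<n])) + oel_adjust n m L U k (remove_at i (map \<theta> [0..<n]))"
  unfolding oel_tax_def vcg_tax_def oel_adjust_def vcg_max_eq_top_sum[OF i m] kth_largest_others[OF i]
  by simp

lemma sum_oel_tax_eq_budget:
  assumes eff: "efficient n m L U f" and th: "\<theta> \<in> profiles n L U" and m: "m \<le> n - 1"
  shows "(\<Sum>i<n. oel_tax n m L U k f i \<theta>) = oel_budget n m L U k (map \<theta> [0..<n])"
proof -
  have "(\<Sum>i<n. oel_tax n m L U k f i \<theta>) = (\<Sum>i<n. (\<Sum>j\<in>{0..<n}-{i}. val (f \<theta>) j (\<theta> j))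
     - top_sum m (remove_at i (map \<theta> [0..<n])) + oel_adjust n m L U k (remove_at i (map \<theta> [0..<n])))"
    using oel_tax_list m by (intro sum.cong) auto
  also have "\<dots> = (real n - 1) * (\<Sum>j<n. val (f \<theta>) j (\<theta> j))
     - (\<Sum>i<n. top_sum m (remove_at i (map \<theta> [0..<n])))
     + (\<Sum>i<n. oel_adjust n m L U k (remove_at i (map \<theta> [0..<n])))"
    by (simp add: sum.distrib sum_subtractf sum_over_others)
  also have "\<dots> = oel_budget n m L U k (map \<theta> [0..<n])"
    unfolding oel_budget_def using efficient_welfare_eq_top_sum[OF eff th] m by simp
  finally show ?thesis .
qed

text \<open>The gap between a Groves tax with function h and the OEL tax only depends on the other
  bidders' types: it is tax_gap evaluated at theta_{-i}.  For anonymous h it is symmetric.\<close>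

definition tax_gap ::
  "nat \<Rightarrow> nat \<Rightarrow> real \<Rightarrow> real \<Rightarrow> nat \<Rightarrow> ((nat \<Rightarrow> real) \<Rightarrow> real) \<Rightarrow> real list \<Rightarrow> real" where
  "tax_gap n m L U k h xs = h (pad xs) + top_sum m xs - oel_adjust n m L U k xs"

lemma groves_minus_oel:
  assumes m: "m \<le> n - 1"
  shows "(\<Sum>i<n. groves_tax n f (\<lambda>_. h) i \<theta>) - (\<Sum>i<n. oel_tax n m L U k f i \<theta>)
     = (\<Sum>i<n. tax_gap n m L U k h (remove_at i (map \<theta> [0..<n])))"
  unfolding sum_subtractf[symmetric] tax_gap_def
  using m by (intro sum.cong) (auto simp: oel_tax_list groves_tax_def others_pad)

lemma symmetric_fn_mset:
  assumes sym: "symmetric_fn n L U h" and xs: "length xs = n - 1" "set xs \<subseteq> {L..U}"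
    and ms: "mset xs = mset ys"
  shows "h (pad xs) = h (pad ys)"
proof -
  obtain p where p: "p permutes {..<length xs}" "permute_list p xs = ys"
    using mset_eq_permutation[OF ms[symmetric]] by blast
  have "length ys = length xs" using ms by (metis size_mset)
  then have pad_ys: "pad ys = pad xs \<circ> p"
    using p permutes_in_image[OF p(1)] permute_list_nth[OF p(1)] permutes_not_in[OF p(1)]
    by (auto simp: pad_def fun_eq_iff)
  have "\<forall>j<n-1. pad xs j \<in> {L..U}"
    using xs nth_mem[of _ xs] by (auto simp: pad_def subset_iff)
  moreover have "p permutes {0..<n-1}" using p(1) xs by (simp add: atLeast0LessThan)
  ultimately have "h (pad xs \<circ> p) = h (pad xs)" using sym unfolding symmetric_fn_def by blast
  then show ?thesis unfolding pad_ys by simp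
qed

lemma tax_gap_mset:
  assumes "symmetric_fn n L U h" "length xs = n - 1" "set xs \<subseteq> {L..U}" "mset xs = mset ys"
  shows "tax_gap n m L U k h xs = tax_gap n m L U k h ys"
  unfolding tax_gap_def using symmetric_fn_mset[OF assms] top_sum_mset[OF assms(4)]
    oel_adjust_mset[OF assms(4)] by simp

text \<open>Induction on the number of entries of ys that differ from the pivot:
  every sub-tuple either equals ys up to order or has fewer such entries.\<close>

lemma vanishing_by_pivot:
  fixes E :: "'a list \<Rightarrow> real" and pivot :: "'a list \<Rightarrow> 'a"
  assumes sym: "\<And>xs ys. length xs = N \<Longrightarrow> set xs \<subseteq> S \<Longrightarrow> mset xs = mset ys \<Longrightarrow> E xs = E ys"
    and pivot_in: "\<And>ys. length ys = N \<Longrightarrow> set ys \<subseteq> S \<Longrightarrow> pivot ys \<in> S"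
    and pivot_stable: "\<And>ys i. length ys = N \<Longrightarrow> set ys \<subseteq> S \<Longrightarrow> i < N \<Longrightarrow>
      pivot (ys[i := pivot ys]) = pivot ys"
    and sum_zero: "\<And>ys. length ys = N \<Longrightarrow> set ys \<subseteq> S \<Longrightarrow>
      (\<Sum>i<Suc N. E (remove_at i (ys @ [pivot ys]))) = 0"
  shows "length ys = N \<Longrightarrow> set ys \<subseteq> S \<Longrightarrow> E ys = 0"
proof (induction ys rule: measure_induct_rule[where f = "\<lambda>ys. length (filter (\<lambda>x. x \<noteq> pivot ys) ys)"])
  case (less ys)
  define p where "p = pivot ys"
  have p: "p \<in> S" using pivot_in less.prems by (simp add: p_def)
  have summand: "E (remove_at i (ys @ [p])) = (if ys ! i = p then E ys else 0)" if i: "i < N" for i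
  proof -
    define ys' where "ys' = ys[i := p]"
    have ys': "length ys' = N" "set ys' \<subseteq> S"
      using less.prems p set_update_subset_insert[of ys i p] by (auto simp: ys'_def)
    have "mset ys' = mset (remove_at i (ys @ [p]))"
      using mset_remove_at_snoc[of i ys p] i less.prems by (simp add: ys'_def)
    then have "E (remove_at i (ys @ [p])) = E ys'" using sym[OF ys'] by simp
    also have "\<dots> = (if ys ! i = p then E ys else 0)"
    proof (cases "ys ! i = p")
      case True
      then have "ys' = ys" unfolding ys'_def by (metis list_update_id)
      then show ?thesis using True by simp
    next
      case False
      have "pivot ys' = p" using pivot_stable less.prems i by (simp add: ys'_def p_def)
      moreover have "length (filter (\<lambda>x. x \<noteq> p) ys') < length (filter (\<lambda>x. x \<noteq> p) ys)"
        using length_filter_update[of i ys "\<lambda>x. x \<noteq> p" p] False i less.prems by (simp add: ys'_def)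
      ultimately have "E ys' = 0" using less.IH ys' by (simp add: p_def)
      then show ?thesis using False by simp
    qed
    finally show ?thesis .
  qed
  have "0 = (\<Sum>i<Suc N. E (remove_at i (ys @ [p])))" using sum_zero less.prems by (simp add: p_def)
  also have "\<dots> = (\<Sum>i<N. if ys ! i = p then E ys else 0) + E ys"
    using summand remove_at_last[of ys p] less.prems by simp
  also have "\<dots> = E ys * (1 + (\<Sum>i<N. if ys ! i = p then 1 else 0))"
    by (simp add: sum_distrib_left if_distrib algebra_simps cong: if_cong)
  finally have "E ys * (1 + (\<Sum>i<N. if ys ! i = p then 1 else 0)) = 0" by simp
  moreover have "(\<Sum>i<N. if ys ! i = p then 1 else 0::real) \<ge> 0" by (intro sum_nonneg) auto
  ultimately show ?case by simp
qed

text \<open>The pivot for index k: extending ys by it lands on the face where the OEL mechanism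
  is budget balanced.\<close>

definition oel_pivot :: "nat \<Rightarrow> real \<Rightarrow> real \<Rightarrow> nat \<Rightarrow> real list \<Rightarrow> real" where
  "oel_pivot n L U k ys = (if k = 0 then U else if k = n then L else kth_list ys k)"

lemma oel_pivot_in:
  assumes "L < U" "k \<le> n" "length ys = n - 1" "set ys \<subseteq> {L..U}"
  shows "oel_pivot n L U k ys \<in> {L..U}"
proof (cases "k = 0 \<or> k = n")
  case False
  then have "kth_list ys k \<in> set ys" using assms by (intro kth_list_in) auto
  then show ?thesis using False assms by (auto simp: oel_pivot_def)
qed (use assms in \<open>auto simp: oel_pivot_def\<close>)

lemma oel_pivot_update:
  assumes "k \<le> n" "length ys = n - 1" "i < n - 1"
  shows "oel_pivot n L U k (ys[i := oel_pivot n L U k ys]) = oel_pivot n L U k ys"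
  using assms kth_list_update_self[of k ys i] by (auto simp: oel_pivot_def)

lemma oel_budget_pivot_extension:
  assumes n: "n \<ge> 2" and m: "1 \<le> m" "m \<le> n - 1" and k: "k \<le> n"
    and ys: "length ys = n - 1" "set ys \<subseteq> {L..U}"
  shows "oel_budget n m L U k (ys @ [oel_pivot n L U k ys]) = 0"
proof (rule oel_budget_zero[OF n m k])
  let ?p = "oel_pivot n L U k ys"
  show "length (ys @ [?p]) = n" using ys n by simp
  show "(k = 0 \<longrightarrow> kth_list (ys @ [?p]) 1 = U) \<and> (k = n \<longrightarrow> kth_list (ys @ [?p]) n = L)
      \<and> (1 \<le> k \<and> k \<le> n - 1 \<longrightarrow> kth_list (ys @ [?p]) k = kth_list (ys @ [?p]) (k + 1))"
  proof (intro conjI impI)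
    assume "k = 0"
    then show "kth_list (ys @ [?p]) 1 = U"
      using ys by (intro kth_list_first_max) (auto simp: oel_pivot_def)
  next
    assume "k = n"
    moreover have "kth_list (ys @ [L]) (length (ys @ [L])) = L"
      using ys by (intro kth_list_last_min) auto
    ultimately show "kth_list (ys @ [?p]) n = L"
      using ys n by (simp add: oel_pivot_def)
  next
    assume k': "1 \<le> k \<and> k \<le> n - 1"
    then have "k \<noteq> 0" "k \<noteq> n" using n by auto
    with k' show "kth_list (ys @ [?p]) k = kth_list (ys @ [?p]) (k + 1)"
      using kth_list_snoc_self[of k ys] ys by (simp add: oel_pivot_def)
  qed
qed

text \<open>If a feasible anonymous Groves mechanism collects at least the OEL revenue everywhere,
  then on the balanced face both totals are zero, so the gaps of the n bidders sum to
  zero there; by the vanishing principle the gap is identically zero.\<close>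

lemma tax_gap_vanishes:
  assumes n: "n \<ge> 2" and m: "1 \<le> m" "m \<le> n - 1" and LU: "L < U" and k: "k \<le> n"
    and eff: "efficient n m L U f" and sym: "symmetric_fn n L U h"
    and feas: "feasible n L U (groves_tax n f (\<lambda>_. h))"
    and below: "\<And>\<theta>. \<theta> \<in> profiles n L U \<Longrightarrow>
      (\<Sum>i<n. oel_tax n m L U k f i \<theta>) \<le> (\<Sum>i<n. groves_tax n f (\<lambda>_. h) i \<theta>)"
    and ys: "length ys = n - 1" "set ys \<subseteq> {L..U}"
  shows "tax_gap n m L U k h ys = 0"
proof -
  let ?E = "tax_gap n m L U k h" and ?pivot = "oel_pivot n L U k"
  have extension_sum: "(\<Sum>i<Suc (n - 1). ?E (remove_at i (ys @ [?pivot ys]))) = 0"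
    if ys: "length ys = n - 1" "set ys \<subseteq> {L..U}" for ys
  proof -
    define \<theta> where "\<theta> = pad (ys @ [?pivot ys])"
    have len: "length (ys @ [?pivot ys]) = n" using ys n by simp
    have list: "map \<theta> [0..<n] = ys @ [?pivot ys]"
      using map_pad[of "ys @ [?pivot ys]"] unfolding \<theta>_def len .
    have \<theta>: "\<theta> \<in> profiles n L U"
      using oel_pivot_in[OF LU k ys] ys len
      by (auto simp: profiles_def \<theta>_def pad_def nth_append subset_iff)
    have "(\<Sum>i<n. oel_tax n m L U k f i \<theta>) = 0"
      using sum_oel_tax_eq_budget[OF eff \<theta> m(2)] oel_budget_pivot_extension[OF n m k ys]
      unfolding list by simp
    moreover have "(\<Sum>i<n. groves_tax n f (\<lambda>_. h) i \<theta>) \<le> 0"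
      using feas \<theta> unfolding feasible_def by blast
    ultimately have "(\<Sum>i<n. groves_tax n f (\<lambda>_. h) i \<theta>) - (\<Sum>i<n. oel_tax n m L U k f i \<theta>) = 0"
      using below[OF \<theta>] by simp
    then have "(\<Sum>i<n. ?E (remove_at i (map \<theta> [0..<n]))) = 0"
      using groves_minus_oel[OF m(2)] by simp
    moreover have "Suc (n - 1) = n" using n by simp
    ultimately show ?thesis unfolding list by simp
  qed
  show ?thesis
  proof (rule vanishing_by_pivot[where E = ?E and pivot = ?pivot and N = "n - 1" and S = "{L..U}"])
    show "?E xs = ?E ys" if "length xs = n - 1" "set xs \<subseteq> {L..U}" "mset xs = mset ys" for xs ys
      using tax_gap_mset[OF sym that] .
    show "?pivot ys \<in> {L..U}" if "length ys = n - 1" "set ys \<subseteq> {L..U}" for ys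
      using oel_pivot_in[OF LU k that] .
    show "?pivot (ys[i := ?pivot ys]) = ?pivot ys" if "length ys = n - 1" "i < n - 1" for ys i
      using oel_pivot_update[OF k that] .
  qed (use extension_sum ys in auto)
qed

theorem lemma2:
  fixes n m k :: nat and L U :: real
    and f :: "(nat \<Rightarrow> real) \<Rightarrow> nat set"
    and h :: "(nat \<Rightarrow> real) \<Rightarrow> real"
  assumes "n \<ge> 2" and "1 \<le> m" and "m \<le> n - 1" and "L < U"
    and "k \<le> n" and "odd (int k - int m)"
    and "efficient n m L U f"
    and "symmetric_fn n L U h"
    and "feasible n L U (groves_tax n f (\<lambda>_. h))"
  shows "\<not> welfare_dominates n L U (groves_tax n f (\<lambda>_. h)) (oel_tax n m L U k f)"
proof
  assume "welfare_dominates n L U (groves_tax n f (\<lambda>_. h)) (oel_tax n m L U k f)"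
  then have below: "\<And>\<theta>. \<theta> \<in> profiles n L U \<Longrightarrow>
      (\<Sum>i<n. oel_tax n m L U k f i \<theta>) \<le> (\<Sum>i<n. groves_tax n f (\<lambda>_. h) i \<theta>)"
    and "\<exists>\<theta>\<in>profiles n L U. (\<Sum>i<n. oel_tax n m L U k f i \<theta>) < (\<Sum>i<n. groves_tax n f (\<lambda>_. h) i \<theta>)"
    unfolding welfare_dominates_def by auto
  then obtain \<theta> where \<theta>: "\<theta> \<in> profiles n L U"
    and strict: "(\<Sum>i<n. oel_tax n m L U k f i \<theta>) < (\<Sum>i<n. groves_tax n f (\<lambda>_. h) i \<theta>)"
    by blast
  have "tax_gap n m L U k h (remove_at i (map \<theta> [0..<n])) = 0" if "i < n" for i
  proof (rule tax_gap_vanishes[OF assms(1-5,7-9) below])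
    show "length (remove_at i (map \<theta> [0..<n])) = n - 1" using that by (simp add: length_remove_at)
    show "set (remove_at i (map \<theta> [0..<n])) \<subseteq> {L..U}"
      using set_remove_at[of i "map \<theta> [0..<n]"] \<theta> unfolding profiles_def by auto
  qed
  then have "(\<Sum>i<n. groves_tax n f (\<lambda>_. h) i \<theta>) - (\<Sum>i<n. oel_tax n m L U k f i \<theta>) = 0"
    using groves_minus_oel[OF assms(3)] by simp
  with strict show False by simp
qed

end
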